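(* Let $\mathcal M=(Q,s_{in},s_T,s_F,\delta)$ be a Turing machine with input that never moves its input head outside the input tape. There is a closed term ${\tt trans}_{\mathcal M}$ and a constant $c$ (depending only on $\mathcal M$) such that for every term $k$ and every configuration $C$ with input tape string $i$ (with $0\le n<|i|$ for its input-head position $n$): (1) if $C$ is final, then ${\tt trans}_{\mathcal M}\,k\,\ulcorner C\urcorner\to_{det}^{m} k\,\ulcorner C\urcorner$ for some $m\le c\,|i|\log_2|i|$; (2) if $C\to_{\mathcal M} D$, then ${\tt trans}_{\mathcal M}\,k\,\ulcorner C\urcorner\to_{det}^{m} {\tt trans}_{\mathcal M}\,k\,\ulcorner D\urcorner$ for some $m\le c\,|i|\log_2|i|$.
   Context: Deterministic $\lambda$-calculus $\Lambda_{\tt det}$: terms $t ::= v \mid t\,v$, values $v ::= x\mid \lambda x.t$, evaluation contexts $E ::= [\cdot]\mid E\,v$, and $E[(\lambda x.t)v]\to_{det} E[t\{x:=v\}]$; $\to_{det}^m$ means exactly $m$ steps. Encodings: a character $a_j$ of an ordered alphabet $\Sigma=\{a_1<\dots<a_p\}$ is $\ulcorner a_j\urcorner:=\lambda x_1\ldots\lambda x_p.x_j$; strings over $\Sigma$ are $\ulcorner\varepsilon\urcorner:=\lambda x_1\ldots\lambda x_p.\lambda x_\varepsilon.x_\varepsilon$, $\ulcorner a_j r\urcorner:=\lambda x_1\ldots\lambda x_p.\lambda x_\varepsilon.x_j\ulcorner r\urcorner$. Reversed binary: $\mathrm{bin}(0)=\varepsilon$, for $n>0$ $\mathrm{bin}(n)=b_0\cdots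 b_\ell$ with $n=\sum_j b_j 2^j$, $b_\ell=1$, encoded as a string over $\{0<1\}$. Turing machines with input: $\mathbb B_I=\{0<1<\mathsf L<\mathsf R\}$, $\mathbb B_W=\{0<1<\Box\}$ ($\Box$ blank). A machine is $\mathcal M=(Q,s_{in},s_T,s_F,\delta)$ with finite ordered set of states $Q=\{s_1<\dots<s_m\}$, initial state $s_{in}$, final states $s_T,s_F$, and partial transition function $\delta:\mathbb B_I\times\mathbb B_W\times Q\rightharpoonup\{-1,+1,0\}\times\mathbb B_W\times\{\leftarrow,\rightarrow,\downarrow\}\times Q$, defined on $(b,a,s)$ only if $s\notin\{s_T,s_F\}$. A configuration is $(i,n\mid w_l,a,w_r\mid s)$ with $i=\mathsf L s'\mathsf R$, $s'\in\{0,1\}^*$, the read-only input tape string, $n\in\mathbb N$ the input-head position, $w_l,w_r\in\mathbb B_W^*$ the work tape to the left/right of the work head, $a\in\mathbb B_W$ the work-head cell, $s\in Q$; it is final if $s\in\{s_T,s_F\}$. Transition: let $b$ be the character of $i$ at position $n$ (counting from $0$) and $\delta(b,a,s)=(d\mid a',\mu\mid s')$. Then $C\to_{\mathcal M} D$ where $D$ has input position $n+d$, state $s'$, and work part: if $\mu=\downarrow$, $(w_l,a',w_r)$; if $\mu=\leftarrow$ and $w_l=w a''$, $(w,a'',a'w_r)$, and if $w_l=\varepsilon$, $(\varepsilon,\Box,a'w_r)$; if $\mu=\rightarrow$ and $w_r=a''w$, $(w_l a',a'',w)$, and if $w_r=\varepsilon$, $(w_la',\Box,\varepsilon)$. The input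 string $i$ is unchanged. The encoding of a configuration is $\ulcorner(i,n\mid w_l,a,w_r\mid s)\urcorner:=\lambda x.\,x\,\ulcorner i\urcorner\,\ulcorner\mathrm{bin}(n)\urcorner\,\ulcorner w_l^{R}\urcorner\,\ulcorner a\urcorner\,\ulcorner w_r\urcorner\,\ulcorner s\urcorner$, with $i$ encoded as a string over $\mathbb B_I$, $w_l^R$ (reversal of $w_l$) and $w_r$ as strings over $\mathbb B_W$, $a$ as a character of $\mathbb B_W$, $s$ as a character of $Q$. Note $|i|\ge 2$. *)

theory Defs
  imports Complex_Main
begin

datatype dterm = Var nat | Lam dterm | App dterm dterm

fun is_val :: "dterm \<Rightarrow> bool" where
  "is_val (Var _) = True"
| "is_val (Lam _) = True"
| "is_val (App _ _) = False"

fun det_term :: "dterm \<Rightarrow> bool" where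
  "det_term (Var _) = True"
| "det_term (Lam t) = det_term t"
| "det_term (App t u) = (det_term t \<and> is_val u \<and> det_term u)"

fun closed_at :: "nat \<Rightarrow> dterm \<Rightarrow> bool" where
  "closed_at k (Var i) = (i < k)"
| "closed_at k (Lam t) = closed_at (Suc k) t"
| "closed_at k (App t u) = (closed_at k t \<and> closed_at k u)"

definition closed :: "dterm \<Rightarrow> bool" where
  "closed t = closed_at 0 t"

fun lift :: "nat \<Rightarrow> dterm \<Rightarrow> dterm" where
  "lift k (Var i) = (if i < k then Var i else Var (Suc i))"
| "lift k (Lam t) = Lam (lift (Suc k) t)"
| "lift k (App t u) = App (lift k t) (lift k u)"

fun subst :: "dterm \<Rightarrow> nat \<Rightarrow> dterm \<Rightarrow> dterm" where
  "subst (Var i) k s = (if k < i then Var (i - 1) else if i = k then s else Var i)"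
| "subst (Lam t) k s = Lam (subst t (Suc k) (lift 0 s))"
| "subst (App t u) k s = App (subst t k s) (subst u k s)"

inductive det_step :: "dterm \<Rightarrow> dterm \<Rightarrow> bool" where
  beta: "is_val v \<Longrightarrow> det_step (App (Lam t) v) (subst t 0 v)"
| ctx: "det_step t t' \<Longrightarrow> is_val v \<Longrightarrow> det_step (App t v) (App t' v)"

definition lams :: "nat \<Rightarrow> dterm \<Rightarrow> dterm" where
  "lams n t = (Lam ^^ n) t"

text \<open>character number j (0-based, so j = 0 is a_1) of an alphabet with p letters:
  \<lambda>x_1 ... x_p. x_(j+1)\<close>
definition enc_char :: "nat \<Rightarrow> nat \<Rightarrow> dterm" where
  "enc_char p j = lams p (Var (p - 1 - j))"

text \<open>strings over an alphabet of p letters (letters as 0-based indices):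
  \<lambda>x_1..x_p x_eps. x_eps  and  \<lambda>x_1..x_p x_eps. x_(j+1) r\<close>
fun enc_str :: "nat \<Rightarrow> nat list \<Rightarrow> dterm" where
  "enc_str p [] = lams (Suc p) (Var 0)"
| "enc_str p (j # r) = lams (Suc p) (App (Var (p - j)) (enc_str p r))"

fun bin :: "nat \<Rightarrow> nat list" where
  "bin n = (if n = 0 then [] else (n mod 2) # bin (n div 2))"

datatype inp = I0 | I1 | IL | IR
datatype work = W0 | W1 | WB
datatype mv = MLeft | MRight | MStay

fun inp_idx :: "inp \<Rightarrow> nat" where
  "inp_idx I0 = 0" | "inp_idx I1 = 1" | "inp_idx IL = 2" | "inp_idx IR = 3"

fun work_idx :: "work \<Rightarrow> nat" where
  "work_idx W0 = 0" | "work_idx W1 = 1" | "work_idx WB = 2"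

text \<open>States are Q = {0 ..< nstates}, ordered numerically (state s is s_(s+1)).\<close>
record tm =
  nstates :: nat
  s_in :: nat
  s_T :: nat
  s_F :: nat
  delta :: "inp \<Rightarrow> work \<Rightarrow> nat \<Rightarrow> (int \<times> work \<times> mv \<times> nat) option"

definition wf_tm :: "tm \<Rightarrow> bool" where
  "wf_tm M \<longleftrightarrow> s_in M < nstates M \<and> s_T M < nstates M \<and> s_F M < nstates M \<and>
     (\<forall>b a s d a' \<mu> s'. delta M b a s = Some (d, a', \<mu>, s') \<longrightarrow>
        s < nstates M \<and> s \<noteq> s_T M \<and> s \<noteq> s_F M \<and> d \<in> {-1, 0, 1} \<and> s' < nstates M)"

text \<open>The input head never leaves the input tape L s' R: on L it never moves left,
  on R it never moves right.\<close>
definition input_bounded :: "tm \<Rightarrow> bool" where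
  "input_bounded M \<longleftrightarrow>
     (\<forall>a s d a' \<mu> s'. delta M IL a s = Some (d, a', \<mu>, s') \<longrightarrow> d \<noteq> -1) \<and>
     (\<forall>a s d a' \<mu> s'. delta M IR a s = Some (d, a', \<mu>, s') \<longrightarrow> d \<noteq> 1)"

type_synonym config = "inp list \<times> nat \<times> work list \<times> work \<times> work list \<times> nat"

definition is_config :: "tm \<Rightarrow> config \<Rightarrow> bool" where
  "is_config M C = (case C of (i, n, wl, a, wr, s) \<Rightarrow>
     (\<exists>s'. set s' \<subseteq> {I0, I1} \<and> i = IL # s' @ [IR]) \<and> s < nstates M)"

definition is_final :: "tm \<Rightarrow> config \<Rightarrow> bool" where
  "is_final M C = (case C of (i, n, wl, a, wr, s) \<Rightarrow> s = s_T M \<or> s = s_F M)"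

fun move_work :: "mv \<Rightarrow> work list \<Rightarrow> work \<Rightarrow> work list \<Rightarrow> work list \<times> work \<times> work list" where
  "move_work MStay wl a' wr = (wl, a', wr)"
| "move_work MLeft wl a' wr =
     (if wl = [] then ([], WB, a' # wr) else (butlast wl, last wl, a' # wr))"
| "move_work MRight wl a' wr =
     (case wr of [] \<Rightarrow> (wl @ [a'], WB, []) | a'' # w \<Rightarrow> (wl @ [a'], a'', w))"

definition tm_step :: "tm \<Rightarrow> config \<Rightarrow> config \<Rightarrow> bool" where
  "tm_step M C D = (case C of (i, n, wl, a, wr, s) \<Rightarrow>
     n < length i \<and>
     (\<exists>d a' \<mu> s' n' wl' a'' wr'. delta M (i ! n) a s = Some (d, a', \<mu>, s') \<and>
        int n' = int n + d \<and> move_work \<mu> wl a' wr = (wl', a'', wr') \<and>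
        D = (i, n', wl', a'', wr', s')))"

definition enc_config :: "tm \<Rightarrow> config \<Rightarrow> dterm" where
  "enc_config M C = (case C of (i, n, wl, a, wr, s) \<Rightarrow>
     Lam (App (App (App (App (App (App (Var 0)
        (enc_str 4 (map inp_idx i)))
        (enc_str 2 (bin n)))
        (enc_str 3 (map work_idx (rev wl))))
        (enc_char 3 (work_idx a)))
        (enc_str 3 (map work_idx wr)))
        (enc_char (nstates M) s)))"

end

theory Submission
  imports Defs
begin

text \<open>The simulating term is \<open>T T\<close> for a Scott-style interpreter \<open>T\<close>: applied to \<open>k\<close> and
  \<open>\<ulcorner>C\<urcorner>\<close>, it lets \<open>\<ulcorner>C\<urcorner>\<close> select the handler of the current state. A final state hands
  \<open>\<ulcorner>C\<urcorner>\<close> to \<open>k\<close>. Otherwise the handler finds the input symbol under the head by walking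
  down the input string while decrementing the binary head position \<open>n\<close>, which costs
  \<open>O(n log n)\<close> steps; the rest of the transition (branching on the work symbol, moving the input
  head by incrementing or decrementing \<open>n\<close> in \<open>O(log n)\<close> steps, and updating the work tape in
  constant time) is cheaper, and the handler ends by calling \<open>T T k\<close> on \<open>\<ulcorner>D\<urcorner>\<close>. Since
  \<open>n < |i|\<close>, both cases take \<open>O(|i| log |i|)\<close> steps.\<close>

section \<open>Reduction in the deterministic calculus\<close>

abbreviation det_steps :: "nat \<Rightarrow> dterm \<Rightarrow> dterm \<Rightarrow> bool" where
  "det_steps n \<equiv> det_step ^^ n"

lemma det_steps_trans[trans]: "det_steps a x y \<Longrightarrow> det_steps b y z \<Longrightarrow> det_steps (a + b) x z"
  by (metis relpowp_add relcomppI)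

lemma closed_at_mono: "closed_at j t \<Longrightarrow> j \<le> l \<Longrightarrow> closed_at l t"
  by (induction t arbitrary: j l) fastforce+

lemma subst_closed_at: "closed_at j t \<Longrightarrow> j \<le> l \<Longrightarrow> subst t l v = t"
  by (induction t arbitrary: j l v) fastforce+

lemma lift_closed_at: "closed_at j t \<Longrightarrow> j \<le> l \<Longrightarrow> lift l t = t"
  by (induction t arbitrary: j l) fastforce+

lemma closed_at_if_closed[simp]: "closed t \<Longrightarrow> closed_at k t"
  unfolding closed_def using closed_at_mono by blast

lemma subst_closed[simp]: "closed t \<Longrightarrow> subst t k v = t"
  unfolding closed_def using subst_closed_at by blast

lemma lift_closed[simp]: "closed t \<Longrightarrow> lift k t = t"
  unfolding closed_def using lift_closed_at by blast

lemma closed_Lam_iff: "closed (Lam t) \<longleftrightarrow> closed_at 1 t"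
  by (simp add: closed_def)

lemma subst_lift[simp]: "subst (lift k t) k s = t"
  by (induction t arbitrary: k s) auto

fun apps :: "dterm \<Rightarrow> dterm list \<Rightarrow> dterm" where
  "apps t [] = t"
| "apps t (v # vs) = apps (App t v) vs"

lemma apps_append: "apps t (xs @ ys) = apps (apps t xs) ys"
  by (induction xs arbitrary: t) auto

lemma closed_at_apps[simp]: "closed_at k (apps t vs) \<longleftrightarrow> closed_at k t \<and> (\<forall>v\<in>set vs. closed_at k v)"
  by (induction vs arbitrary: t) auto

lemma det_term_apps[simp]: "det_term (apps t vs) \<longleftrightarrow> det_term t \<and> (\<forall>v\<in>set vs. is_val v \<and> det_term v)"
  by (induction vs arbitrary: t) auto

lemma subst_apps: "subst (apps t ws) k v = apps (subst t k v) (map (\<lambda>w. subst w k v) ws)"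
  by (induction ws arbitrary: t) auto

lemma det_step_apps: "det_step t u \<Longrightarrow> \<forall>v\<in>set vs. is_val v \<Longrightarrow> det_step (apps t vs) (apps u vs)"
  by (induction vs arbitrary: t u) (auto intro: det_step.ctx)

lemma det_steps_apps: "det_steps m t u \<Longrightarrow> \<forall>v\<in>set vs. is_val v \<Longrightarrow> det_steps m (apps t vs) (apps u vs)"
proof (induction m arbitrary: t)
  case (Suc m)
  then obtain t' where "det_step t t'" "det_steps m t' u"
    by (metis relpowp_Suc_D2)
  with Suc show ?case
    by (meson det_step_apps relpowp_Suc_I2)
qed simp

lemma det_steps_App: "det_steps m t u \<Longrightarrow> is_val v \<Longrightarrow> det_steps m (App t v) (App u v)"
  using det_steps_apps[of m t u "[v]"] by simp

text \<open>\<open>red\<close> is \<open>det_step\<close> as a partial function; by \<open>run_det_steps\<close> the simplifier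
  evaluates concrete reduction sequences together with their length.\<close>

fun red :: "dterm \<Rightarrow> dterm option" where
  "red (App (Lam t) v) = (if is_val v then Some (subst t 0 v) else None)"
| "red (App (App t u) v) = (if is_val v then map_option (\<lambda>x. App x v) (red (App t u)) else None)"
| "red _ = None"

lemma det_step_if_red: "red t = Some u \<Longrightarrow> det_step t u"
  by (induction t arbitrary: u rule: red.induct)
     (auto split: if_splits intro: det_step.intros)

fun run :: "nat \<Rightarrow> dterm \<Rightarrow> dterm option" where
  "run 0 t = Some t"
| "run (Suc n) t = (case red t of None \<Rightarrow> None | Some u \<Rightarrow> run n u)"

lemma run_numeral[simp]:
  "run (numeral k) t = (case red t of None \<Rightarrow> None | Some u \<Rightarrow> run (pred_numeral k) u)"
  by (simp add: numeral_eq_Suc)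

lemma run_det_steps: "run n t = Some u \<Longrightarrow> det_steps n t u"
proof (induction n arbitrary: t)
  case (Suc n)
  then obtain t' where "red t = Some t'" "run n t' = Some u"
    by (auto split: option.splits)
  with Suc show ?case
    by (meson det_step_if_red relpowp_Suc_I2)
qed simp

lemma lams_0[simp]: "lams 0 t = t"
  by (simp add: lams_def)

lemma lams_Suc[simp]: "lams (Suc n) t = Lam (lams n t)"
  by (simp add: lams_def)

lemma lams_numeral[simp]: "lams (numeral k) t = Lam (lams (pred_numeral k) t)"
  by (simp add: numeral_eq_Suc)

lemma closed_at_lams[simp]: "closed_at j (lams n t) \<longleftrightarrow> closed_at (n + j) t"
  by (induction n arbitrary: j) auto

lemma det_term_lams[simp]: "det_term (lams n t) = det_term t"
  by (induction n) auto

lemma is_val_lams[simp]: "0 < n \<Longrightarrow> is_val (lams n t)"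
  by (cases n) auto

lemma subst_lams: "closed v \<Longrightarrow> subst (lams n b) k v = lams n (subst b (n + k) v)"
  by (induction n arbitrary: k) auto

lemma red_App_lams:
  "c = lams n b \<Longrightarrow> 0 < n \<Longrightarrow> red (App c v) = (if is_val v then Some (subst (lams (n - 1) b) 0 v) else None)"
  by (cases n) auto

text \<open>\<open>substs b vs\<close> instantiates the \<open>length vs\<close> outermost free indices of \<open>b\<close>, the first element of
  \<open>vs\<close> going to the highest index, as \<open>length vs\<close> beta-steps do.\<close>

fun substs :: "dterm \<Rightarrow> dterm list \<Rightarrow> dterm" where
  "substs b [] = b"
| "substs b (v # vs) = substs (subst b (length vs) v) vs"

lemma det_steps_lams_apps:
  assumes "length vs = n" and "\<forall>v\<in>set vs. closed v \<and> is_val v"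
  shows "det_steps n (apps (lams n b) vs) (substs b vs)"
  using assms
proof (induction vs arbitrary: b n)
  case (Cons v vs)
  then obtain n' where n: "n = Suc n'" "length vs = n'"
    by auto
  have "det_step (App (Lam (lams n' b)) v) (lams n' (subst b n' v))"
    using Cons.prems det_step.beta[of v "lams n' b"] by (simp add: subst_lams)
  then have "det_step (apps (lams n b) (v # vs)) (apps (lams n' (subst b n' v)) vs)"
    using Cons.prems n det_step_apps by simp
  moreover have "det_steps n' (apps (lams n' (subst b n' v)) vs) (substs (subst b n' v) vs)"
    using Cons n by auto
  ultimately have "det_steps (Suc n') (apps (lams n b) (v # vs)) (substs (subst b n' v) vs)"
    by (rule relpowp_Suc_I2)
  then show ?case
    using n by simp
qed simp

lemma substs_closed: "closed t \<Longrightarrow> substs t vs = t"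
  by (induction vs arbitrary: t) auto

lemma substs_Var:
  "i < length vs \<Longrightarrow> \<forall>v\<in>set vs. closed v \<Longrightarrow> substs (Var i) vs = vs ! (length vs - 1 - i)"
proof (induction vs arbitrary: i)
  case (Cons v vs)
  then show ?case
    by (cases "i = length vs") (auto simp: substs_closed Suc_diff_Suc nth_Cons')
qed simp

lemma substs_apps: "substs (apps t ws) vs = apps (substs t vs) (map (\<lambda>w. substs w vs) ws)"
  by (induction vs arbitrary: t ws) (auto simp: subst_apps comp_def)

definition combinator :: "dterm \<Rightarrow> bool" where
  "combinator t \<longleftrightarrow> closed t \<and> is_val t \<and> det_term t"

lemma combinator_closed[simp]: "combinator t \<Longrightarrow> closed t"
  and combinator_is_val[simp]: "combinator t \<Longrightarrow> is_val t"
  and combinator_det_term[simp]: "combinator t \<Longrightarrow> det_term t"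
  by (simp_all add: combinator_def)

section \<open>Encodings\<close>

lemma closed_at_enc_str: "closed_at k (enc_str p xs)"
  by (induction xs arbitrary: k) auto

lemma is_val_enc_str: "is_val (enc_str p xs)"
  by (cases xs) auto

lemma det_term_enc_str: "det_term (enc_str p xs)"
  by (induction xs) (auto simp: is_val_enc_str)

lemma combinator_enc_str[simp]: "combinator (enc_str p xs)"
  unfolding combinator_def closed_def
  by (simp add: closed_at_enc_str is_val_enc_str det_term_enc_str)

lemma combinator_enc_char[simp]: "0 < p \<Longrightarrow> combinator (enc_char p j)"
  unfolding combinator_def closed_def by (simp add: enc_char_def)

lemma enc_char_select:
  assumes "j < p" and "length fs = p" and "\<forall>f\<in>set fs. closed f \<and> is_val f"
    and "\<forall>w\<in>set ws. is_val w"
  shows "det_steps p (apps (enc_char p j) (fs @ ws)) (apps (fs ! j) ws)"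
proof -
  have "det_steps p (apps (enc_char p j) fs) (substs (Var (p - 1 - j)) fs)"
    unfolding enc_char_def using assms det_steps_lams_apps by blast
  also have "substs (Var (p - 1 - j)) fs = fs ! j"
    using assms by (subst substs_Var) auto
  finally show ?thesis
    unfolding apps_append using assms(4) by (rule det_steps_apps)
qed

lemma inp_idx_less: "inp_idx b < 4"
  by (cases b) auto

lemma work_idx_less: "work_idx a < 3"
  by (cases a) auto

lemma enc_config_tuple:
  "enc_config M (i, n, wl, a, wr, s) = Lam (apps (Var 0) [enc_str 4 (map inp_idx i), enc_str 2 (bin n),
     enc_str 3 (map work_idx (rev wl)), enc_char 3 (work_idx a), enc_str 3 (map work_idx wr),
     enc_char (nstates M) s])"
  by (simp add: enc_config_def)

declare bin.simps[simp del]

lemma bin_0[simp]: "bin 0 = []"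
  by (simp add: bin.simps)

lemma bin_pos: "0 < n \<Longrightarrow> bin n = n mod 2 # bin (n div 2)"
  by (simp add: bin.simps)

lemma bin_Suc_0[simp]: "bin (Suc 0) = [1]"
  by (simp add: bin_pos)

lemma bin_double: "0 < q \<Longrightarrow> bin (2 * q) = 0 # bin q"
  by (simp add: bin_pos)

lemma bin_Suc_double: "bin (Suc (2 * q)) = 1 # bin q"
  by (simp add: bin_pos)

lemma length_bin_mono: "m \<le> n \<Longrightarrow> length (bin m) \<le> length (bin n)"
proof (induction n arbitrary: m rule: less_induct)
  case (less n)
  show ?case
  proof (cases "m = 0")
    case False
    then have "0 < n" "m div 2 \<le> n div 2" "n div 2 < n"
      using less.prems by (simp_all add: div_le_mono)
    then show ?thesis
      using less.IH[of "n div 2" "m div 2"] False by (simp add: bin_pos)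
  qed simp
qed

lemma two_pow_length_bin: "0 < n \<Longrightarrow> 2 ^ (length (bin n) - 1) \<le> n"
proof (induction n rule: less_induct)
  case (less n)
  show ?case
  proof (cases "n div 2 = 0")
    case False
    then have "2 ^ (length (bin (n div 2)) - 1) \<le> n div 2" "0 < length (bin (n div 2))"
      using less by (simp_all add: bin_pos)
    then have "(2::nat) ^ length (bin (n div 2)) \<le> 2 * (n div 2)"
      by (cases "length (bin (n div 2))") auto
    then show ?thesis
      using less.prems by (simp add: bin_pos)
  qed (use less in \<open>simp add: bin_pos\<close>)
qed

lemma length_bin_le_log: "n < l \<Longrightarrow> real (length (bin n)) \<le> 1 + log 2 (real l)"
proof (cases "n = 0")
  case False
  moreover assume "n < l"
  ultimately have "2 ^ (length (bin n) - 1) \<le> l"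
    using two_pow_length_bin[of n] by simp
  then have "real (length (bin n) - 1) \<le> log 2 (real l)"
    using le_log2_of_power by blast
  then show ?thesis
    by linarith
qed simp

section \<open>Binary counter\<close>

text \<open>\<open>\<ulcorner>j # r\<urcorner>\<close> for a tail \<open>r\<close> given by the free index \<open>i\<close>.\<close>

abbreviation enc_cons_var :: "nat \<Rightarrow> nat \<Rightarrow> nat \<Rightarrow> dterm" where
  "enc_cons_var p j i \<equiv> lams (Suc p) (App (Var (p - j)) (Var (i + Suc p)))"

text \<open>The recursive combinators take themselves as first argument and pass their result to a
  continuation, which is their last argument.\<close>

definition dec_bin_1_cons :: dterm where
  "dec_bin_1_cons = lams 3 (App (Var 1) (enc_cons_var 2 0 0))"

definition dec_bin_1_nil :: dterm where
  "dec_bin_1_nil = lams 2 (App (Var 1) (enc_str 2 []))"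

definition dec_bin_0 :: dterm where
  "dec_bin_0 = lams 3 (apps (Var 1) [Var 1, Var 2, Lam (App (Var 1) (enc_cons_var 2 1 0))])"

definition dec_bin_1 :: dterm where
  "dec_bin_1 = lams 3 (apps (Var 2) [dec_bin_1_cons, dec_bin_1_cons, dec_bin_1_nil, Var 0, Var 2])"

text \<open>Unreachable: \<open>0\<close> is never decremented.\<close>

definition dec_bin_nil :: dterm where
  "dec_bin_nil = lams 2 (Var 0)"

definition dec_bin :: dterm where
  "dec_bin = lams 3 (apps (Var 1) [dec_bin_0, dec_bin_1, dec_bin_nil, Var 2, Var 0])"

definition inc_bin_0 :: dterm where
  "inc_bin_0 = lams 3 (App (Var 0) (enc_cons_var 2 1 2))"

definition inc_bin_1 :: dterm where
  "inc_bin_1 = lams 3 (apps (Var 1) [Var 1, Var 2, Lam (App (Var 1) (enc_cons_var 2 0 0))])"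

definition inc_bin_nil :: dterm where
  "inc_bin_nil = lams 2 (App (Var 0) (enc_str 2 [1]))"

definition inc_bin :: dterm where
  "inc_bin = lams 3 (apps (Var 1) [inc_bin_0, inc_bin_1, inc_bin_nil, Var 2, Var 0])"

lemmas bin_counter_defs = dec_bin_1_cons_def dec_bin_1_nil_def dec_bin_0_def dec_bin_1_def
  dec_bin_nil_def dec_bin_def inc_bin_0_def inc_bin_1_def inc_bin_nil_def inc_bin_def

lemmas red_bin_counter[simp] = bin_counter_defs[THEN red_App_lams]

lemma combinator_bin_counter[simp]:
  "combinator dec_bin_1_cons" "combinator dec_bin_1_nil" "combinator dec_bin_0" "combinator dec_bin_1"
  "combinator dec_bin_nil" "combinator dec_bin" "combinator inc_bin_0" "combinator inc_bin_1"
  "combinator inc_bin_nil" "combinator inc_bin"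
  unfolding combinator_def closed_def by (simp_all add: bin_counter_defs)

lemma dec_bin_steps:
  assumes "0 < n" and "closed k" and "is_val k"
  shows "\<exists>m. det_steps m (apps dec_bin [dec_bin, enc_str 2 (bin n), k]) (App k (enc_str 2 (bin (n - 1))))
    \<and> m \<le> 15 * length (bin n)"
  using assms
proof (induction n arbitrary: k rule: less_induct)
  case (less n)
  note k = less.prems(2,3)
  obtain q b where nq: "n = 2 * q + b" "b < 2"
    by (metis mod_less_divisor mult_div_mod_eq zero_less_numeral)
  consider "b = 0" | "b = 1" "q = 0" | "b = 1" "0 < q"
    using nq by linarith
  then show ?case
  proof cases
    case 1
    with nq less.prems have "0 < q" "n - 1 = 2 * (q - 1) + 1"
      by simp_all
    with nq 1 have q: "0 < q" "bin n = 0 # bin q" "bin (n - 1) = 1 # bin (q - 1)"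
      by (simp_all add: bin_double bin_Suc_double)
    define k' where "k' = Lam (App k (enc_cons_var 2 1 0))"
    have k': "closed k'" "is_val k'"
      using k by (simp_all add: k'_def closed_Lam_iff)
    obtain m where m: "det_steps m (apps dec_bin [dec_bin, enc_str 2 (bin q), k']) (App k' (enc_str 2 (bin (q - 1))))"
        "m \<le> 15 * length (bin q)"
      using less.IH[of q k'] q k' nq by auto
    have "det_steps 9 (apps dec_bin [dec_bin, enc_str 2 (bin n), k]) (apps dec_bin [dec_bin, enc_str 2 (bin q), k'])"
      by (rule run_det_steps) (simp add: q k k'_def)
    also note m(1)
    also have "det_steps 1 (App k' (enc_str 2 (bin (q - 1)))) (App k (enc_str 2 (1 # bin (q - 1))))"
      by (rule run_det_steps) (simp add: k k'_def)
    finally have "det_steps (9 + m + 1) (apps dec_bin [dec_bin, enc_str 2 (bin n), k]) (App k (enc_str 2 (bin (n - 1))))"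
      unfolding q(3) .
    moreover have "9 + m + 1 \<le> 15 * length (bin n)"
      using m(2) q(2) by simp
    ultimately show ?thesis
      by blast
  next
    case 2
    then show ?thesis
      using nq k by (intro exI[of _ 14] conjI run_det_steps) (simp_all add: bin_Suc_double)
  next
    case 3
    then have bins: "bin n = 1 # bin q" "bin (n - 1) = 0 # bin q"
      using nq by (simp_all add: bin_Suc_double bin_double)
    have "det_steps 15 (apps dec_bin [dec_bin, enc_str 2 (bin n), k]) (App k (enc_str 2 (bin (n - 1))))"
    proof (cases "q mod 2 = 0")
      case True
      then show ?thesis
        unfolding bins(2) using 3 k by (intro run_det_steps) (simp add: bins(1) bin_pos)
    next
      case False
      then have "q mod 2 = 1"
        by simp
      then show ?thesis
        unfolding bins(2) using 3 k by (intro run_det_steps) (simp add: bins(1) bin_pos)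
    qed
    then show ?thesis
      using bins by (intro exI[of _ 15]) simp
  qed
qed

lemma inc_bin_steps:
  assumes "closed k" and "is_val k"
  shows "\<exists>m. det_steps m (apps inc_bin [inc_bin, enc_str 2 (bin n), k]) (App k (enc_str 2 (bin (Suc n))))
    \<and> m \<le> 10 * (length (bin n) + 1)"
  using assms
proof (induction n arbitrary: k rule: less_induct)
  case (less n)
  note k = less.prems
  obtain q b where nq: "n = 2 * q + b" "b < 2"
    by (metis mod_less_divisor mult_div_mod_eq zero_less_numeral)
  consider "n = 0" | "b = 0" "0 < q" | "b = 1"
    using nq by linarith
  then show ?case
  proof cases
    case 1
    then show ?thesis
      using k by (intro exI[of _ 8] conjI run_det_steps) simp_all
  next
    case 2
    then have "bin n = 0 # bin q" "bin (Suc n) = 1 # bin q"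
      using nq by (simp_all add: bin_double bin_Suc_double)
    then show ?thesis
      using k by (intro exI[of _ 9] conjI run_det_steps) simp_all
  next
    case 3
    then have q: "bin n = 1 # bin q" "bin (Suc n) = 0 # bin (Suc q)" "q < n"
      using nq bin_double[of "Suc q"] by (simp_all add: bin_Suc_double)
    define k' where "k' = Lam (App k (enc_cons_var 2 0 0))"
    have k': "closed k'" "is_val k'"
      using k by (simp_all add: k'_def closed_Lam_iff)
    obtain m where m: "det_steps m (apps inc_bin [inc_bin, enc_str 2 (bin q), k']) (App k' (enc_str 2 (bin (Suc q))))"
        "m \<le> 10 * (length (bin q) + 1)"
      using less.IH[OF q(3) k'] by blast
    have "det_steps 9 (apps inc_bin [inc_bin, enc_str 2 (bin n), k]) (apps inc_bin [inc_bin, enc_str 2 (bin q), k'])"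
      by (rule run_det_steps) (simp add: q k k'_def)
    also note m(1)
    also have "det_steps 1 (App k' (enc_str 2 (bin (Suc q)))) (App k (enc_str 2 (bin (Suc n))))"
      by (rule run_det_steps) (simp add: q k k'_def)
    finally show ?thesis
      using m(2) q(1) by (intro exI[of _ "9 + m + 1"]) simp
  qed
qed

section \<open>Reading the input tape\<close>

text \<open>\<open>nth_inp\<close> walks down the input string, decrementing the position, and returns the current
  letter when the position has become \<open>\<ulcorner>bin 0\<urcorner> = \<ulcorner>\<epsilon>\<urcorner>\<close>.\<close>

definition nth_inp_here :: "nat \<Rightarrow> dterm" where
  "nth_inp_here j = lams 3 (enc_char 4 j)"

definition nth_inp_next :: dterm where
  "nth_inp_next = lams 4 (apps dec_bin [dec_bin, Var 0, Lam (apps (Var 2) [Var 2, Var 0, Var 3])])"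

definition nth_inp_cons :: "nat \<Rightarrow> dterm" where
  "nth_inp_cons j = lams 3 (apps (Var 0) [nth_inp_next, nth_inp_next, nth_inp_here j, Var 2, Var 1, Var 0])"

definition nth_inp_nil :: dterm where
  "nth_inp_nil = lams 2 (Var 1)"

definition nth_inp :: dterm where
  "nth_inp = lams 3 (apps (Var 0)
     [nth_inp_cons 0, nth_inp_cons 1, nth_inp_cons 2, nth_inp_cons 3, nth_inp_nil, Var 2, Var 1])"

lemmas nth_inp_defs = nth_inp_here_def nth_inp_next_def nth_inp_cons_def nth_inp_nil_def nth_inp_def

lemmas red_nth_inp[simp] = nth_inp_defs[THEN red_App_lams]

lemma combinator_nth_inp[simp]:
  "combinator (nth_inp_here j)" "combinator nth_inp_next" "combinator (nth_inp_cons j)"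
  "combinator nth_inp_nil" "combinator nth_inp"
  unfolding combinator_def closed_def by (simp_all add: nth_inp_defs)

lemma nth_inp_steps:
  "n < length xs \<Longrightarrow>
   \<exists>m. det_steps m (apps nth_inp [nth_inp, enc_str 2 (bin n), enc_str 4 (map inp_idx xs)])
       (enc_char 4 (inp_idx (xs ! n)))
     \<and> m \<le> (n + 1) * (40 + 15 * length (bin n))"
proof (induction n arbitrary: xs)
  case 0
  then obtain x xs' where "xs = x # xs'"
    by (cases xs) auto
  then have "det_steps 17 (apps nth_inp [nth_inp, enc_str 2 (bin 0), enc_str 4 (map inp_idx xs)])
      (enc_char 4 (inp_idx (xs ! 0)))"
    by (cases x; intro run_det_steps; simp)
  then show ?case
    by (intro exI[of _ 17]) simp
next
  case (Suc n)
  then obtain x xs' where xs: "xs = x # xs'" and n: "n < length xs'"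
    by (cases xs) auto
  define k where "k = Lam (apps nth_inp [nth_inp, Var 0, enc_str 4 (map inp_idx xs')])"
  have k: "closed k" "is_val k"
    by (simp_all add: k_def closed_Lam_iff)
  obtain md where md: "det_steps md (apps dec_bin [dec_bin, enc_str 2 (bin (Suc n)), k]) (App k (enc_str 2 (bin n)))"
      "md \<le> 15 * length (bin (Suc n))"
    using dec_bin_steps[of "Suc n" k] k by auto
  obtain mr where mr: "det_steps mr (apps nth_inp [nth_inp, enc_str 2 (bin n), enc_str 4 (map inp_idx xs')])
      (enc_char 4 (inp_idx (xs' ! n)))" "mr \<le> (n + 1) * (40 + 15 * length (bin n))"
    using Suc.IH[OF n] by blast
  have "bin (Suc n) = Suc n mod 2 # bin (Suc n div 2)"
    by (simp add: bin_pos)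
  then have "det_steps 18 (apps nth_inp [nth_inp, enc_str 2 (bin (Suc n)), enc_str 4 (map inp_idx xs)])
      (apps dec_bin [dec_bin, enc_str 2 (bin (Suc n)), k])"
    by (cases x; cases "Suc n mod 2 = 0"; intro run_det_steps; simp add: xs k_def)
  also note md(1)
  also have "det_steps 1 (App k (enc_str 2 (bin n))) (apps nth_inp [nth_inp, enc_str 2 (bin n), enc_str 4 (map inp_idx xs')])"
    by (rule run_det_steps) (simp add: k_def)
  also note mr(1)
  finally have "det_steps (18 + md + 1 + mr) (apps nth_inp [nth_inp, enc_str 2 (bin (Suc n)), enc_str 4 (map inp_idx xs)])
      (enc_char 4 (inp_idx (xs ! Suc n)))"
    by (simp add: xs)
  moreover have "18 + md + 1 + mr \<le> (Suc n + 1) * (40 + 15 * length (bin (Suc n)))"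
  proof -
    have "(n + 1) * (40 + 15 * length (bin n)) \<le> (n + 1) * (40 + 15 * length (bin (Suc n)))"
      using length_bin_mono[of n "Suc n"] by (intro mult_le_mono2) simp
    then show ?thesis
      using md(2) mr(2) by simp
  qed
  ultimately show ?case
    by blast
qed

section \<open>One transition of the machine\<close>

text \<open>\<open>call_next ts\<close> is \<open>\<lambda>x. T T x \<ulcorner>D\<urcorner>\<close>, where \<open>T\<close> is the innermost enclosing binder and
  \<open>\<ulcorner>D\<urcorner> = \<lambda>y. y ts\<close>; applied to \<open>k\<close>, it continues the simulation with \<open>trans k \<ulcorner>D\<urcorner>\<close>,
  since the simulating term is \<open>T T\<close>.\<close>

abbreviation call_next :: "dterm list \<Rightarrow> dterm" where
  "call_next ts \<equiv> Lam (apps (Var 1) [Var 1, Var 0, Lam (apps (Var 0) ts)])"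

fun work_move :: "nat \<Rightarrow> mv \<Rightarrow> work \<Rightarrow> nat \<Rightarrow> dterm" where
  "work_move Q MStay a s =
     lams 5 (call_next [Var 6, Var 5, Var 4, enc_char 3 (work_idx a), Var 3, enc_char Q s])"
| "work_move Q MLeft a s = lams 5 (apps (Var 2)
     (map (\<lambda>c. lams 5 (call_next [Var 5, Var 4, Var 6, enc_char 3 c, enc_cons_var 3 (work_idx a) 3, enc_char Q s]))
        [0, 1, 2] @
      [lams 4 (call_next [Var 5, Var 4, enc_str 3 [], enc_char 3 2, enc_cons_var 3 (work_idx a) 3, enc_char Q s]),
       Var 4, Var 3, Var 1, Var 0]))"
| "work_move Q MRight a s = lams 5 (apps (Var 1)
     (map (\<lambda>c. lams 5 (call_next [Var 5, Var 4, enc_cons_var 3 (work_idx a) 3, enc_char 3 c, Var 6, enc_char Q s]))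
        [0, 1, 2] @
      [lams 4 (call_next [Var 5, Var 4, enc_cons_var 3 (work_idx a) 3, enc_char 3 2, enc_str 3 [], enc_char Q s]),
       Var 4, Var 3, Var 2, Var 0]))"

lemma combinator_work_move[simp]: "0 < Q \<Longrightarrow> combinator (work_move Q \<mu> a s)"
  unfolding combinator_def closed_def by (cases \<mu>; cases a) simp_all

lemma work_move_steps:
  assumes "0 < Q" and "combinator I" "combinator N" "combinator T"
    and "move_work \<mu> wl a wr = (wl', a', wr')"
  shows "\<exists>m. det_steps m
      (apps (work_move Q \<mu> a s) [I, N, enc_str 3 (map work_idx (rev wl)), enc_str 3 (map work_idx wr), T])
      (Lam (apps T [T, Var 0, Lam (apps (Var 0) [I, N, enc_str 3 (map work_idx (rev wl')),
         enc_char 3 (work_idx a'), enc_str 3 (map work_idx wr'), enc_char Q s])]))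
    \<and> m \<le> 14"
proof (cases \<mu>)
  case MStay
  then show ?thesis
    using assms by (cases a; (clarsimp, intro exI[of _ 5] conjI run_det_steps; simp))
next
  case MLeft
  show ?thesis
  proof (cases wl rule: rev_cases)
    case Nil
    then show ?thesis
      using assms MLeft by (cases a; (clarsimp, intro exI[of _ 13] conjI run_det_steps; simp))
  next
    case (snoc ys y)
    then show ?thesis
      using assms MLeft by (cases a; cases y; (clarsimp, intro exI[of _ 14] conjI run_det_steps; simp))
  qed
next
  case MRight
  show ?thesis
  proof (cases wr)
    case Nil
    then show ?thesis
      using assms MRight by (cases a; (clarsimp, intro exI[of _ 13] conjI run_det_steps; simp))
  next
    case (Cons y ys)
    then show ?thesis
      using assms MRight by (cases a; cases y; (clarsimp, intro exI[of _ 14] conjI run_det_steps; simp))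
  qed
qed

text \<open>The \<open>None\<close> case, where the machine is stuck, is never reached.\<close>

fun do_action :: "nat \<Rightarrow> (int \<times> work \<times> mv \<times> nat) option \<Rightarrow> dterm" where
  "do_action Q None = Lam (Var 0)"
| "do_action Q (Some (d, a, \<mu>, s)) =
     (if d = 1 then lams 5 (apps inc_bin [inc_bin, Var 3, Lam (apps (work_move Q \<mu> a s) [Var 5, Var 0, Var 3, Var 2, Var 1])])
      else if d = -1 then lams 5 (apps dec_bin [dec_bin, Var 3, Lam (apps (work_move Q \<mu> a s) [Var 5, Var 0, Var 3, Var 2, Var 1])])
      else lams 5 (apps (work_move Q \<mu> a s) [Var 4, Var 3, Var 2, Var 1, Var 0]))"

lemma combinator_do_action[simp]: "0 < Q \<Longrightarrow> combinator (do_action Q r)"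
  unfolding combinator_def closed_def by (cases r) auto

lemma do_action_steps:
  assumes "0 < Q" and "d \<in> {-1, 0, 1}" and "int n' = int n + d"
    and "combinator I" "combinator L" "combinator R" "combinator T"
  shows "\<exists>m. det_steps m (apps (do_action Q (Some (d, a, \<mu>, s))) [I, enc_str 2 (bin n), L, R, T])
      (apps (work_move Q \<mu> a s) [I, enc_str 2 (bin n'), L, R, T])
    \<and> m \<le> 6 + 15 * (length (bin n) + 1)"
proof -
  define k where "k = Lam (apps (work_move Q \<mu> a s) [I, Var 0, L, R, T])"
  have k: "closed k" "is_val k"
    using assms by (simp_all add: k_def closed_Lam_iff)
  consider "d = 0" | "d = 1" | "d = -1"
    using assms(2) by blast
  then show ?thesis
  proof cases
    case 1
    then have "det_steps 5 (apps (do_action Q (Some (d, a, \<mu>, s))) [I, enc_str 2 (bin n), L, R, T])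
        (apps (work_move Q \<mu> a s) [I, enc_str 2 (bin n'), L, R, T])"
      using assms by (intro run_det_steps) simp
    then show ?thesis
      by (intro exI[of _ 5]) simp
  next
    case 2
    with assms have n: "n' = Suc n"
      by simp
    obtain m where m: "det_steps m (apps inc_bin [inc_bin, enc_str 2 (bin n), k]) (App k (enc_str 2 (bin (Suc n))))"
        "m \<le> 10 * (length (bin n) + 1)"
      using inc_bin_steps k by blast
    have "det_steps 5 (apps (do_action Q (Some (d, a, \<mu>, s))) [I, enc_str 2 (bin n), L, R, T])
        (apps inc_bin [inc_bin, enc_str 2 (bin n), k])"
      using assms 2 by (intro run_det_steps) (simp add: k_def)
    also note m(1)
    also have "det_steps 1 (App k (enc_str 2 (bin (Suc n)))) (apps (work_move Q \<mu> a s) [I, enc_str 2 (bin n'), L, R, T])"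
      unfolding n using assms by (intro run_det_steps) (simp add: k_def)
    finally show ?thesis
      using m(2) by (intro exI[of _ "5 + m + 1"]) simp
  next
    case 3
    with assms have n: "0 < n" "n' = n - 1"
      by simp_all
    obtain m where m: "det_steps m (apps dec_bin [dec_bin, enc_str 2 (bin n), k]) (App k (enc_str 2 (bin (n - 1))))"
        "m \<le> 15 * length (bin n)"
      using dec_bin_steps n(1) k by blast
    have "det_steps 5 (apps (do_action Q (Some (d, a, \<mu>, s))) [I, enc_str 2 (bin n), L, R, T])
        (apps dec_bin [dec_bin, enc_str 2 (bin n), k])"
      using assms 3 by (intro run_det_steps) (simp add: k_def)
    also note m(1)
    also have "det_steps 1 (App k (enc_str 2 (bin (n - 1)))) (apps (work_move Q \<mu> a s) [I, enc_str 2 (bin n'), L, R, T])"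
      unfolding n(2) using assms by (intro run_det_steps) (simp add: k_def)
    finally show ?thesis
      using m(2) by (intro exI[of _ "5 + m + 1"]) simp
  qed
qed

definition branch_work :: "tm \<Rightarrow> inp \<Rightarrow> nat \<Rightarrow> dterm" where
  "branch_work M b j = lams 6 (apps (Var 2)
     (map (\<lambda>a. do_action (nstates M) (delta M b a j)) [W0, W1, WB] @ [Var 5, Var 4, Var 3, Var 1, Var 0]))"

lemmas red_branch_work[simp] = branch_work_def[THEN red_App_lams]

lemma combinator_branch_work[simp]: "0 < nstates M \<Longrightarrow> combinator (branch_work M b j)"
  unfolding combinator_def closed_def by (simp add: branch_work_def)

lemma wf_tm_delta:
  "wf_tm M \<Longrightarrow> delta M b a j = Some (d, a', \<mu>, s') \<Longrightarrow>
   s' < nstates M \<and> d \<in> {-1, 0, 1} \<and> j < nstates M \<and> j \<noteq> s_T M \<and> j \<noteq> s_F M"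
  unfolding wf_tm_def by blast

lemma wf_tm_nstates_pos: "wf_tm M \<Longrightarrow> 0 < nstates M"
  unfolding wf_tm_def by auto

lemma branch_work_steps:
  assumes wf: "wf_tm M" and \<delta>: "delta M b a j = Some (d, a', \<mu>, s')" and "int n' = int n + d"
    and "combinator I" "combinator L" "combinator R" "combinator T"
  shows "\<exists>m. det_steps m (apps (branch_work M b j) [I, enc_str 2 (bin n), L, enc_char 3 (work_idx a), R, T])
      (apps (work_move (nstates M) \<mu> a' s') [I, enc_str 2 (bin n'), L, R, T])
    \<and> m \<le> 15 + 15 * (length (bin n) + 1)"
proof -
  let ?acts = "map (\<lambda>a. do_action (nstates M) (delta M b a j)) [W0, W1, WB]"
  let ?args = "[I, enc_str 2 (bin n), L, R, T]"
  have Q: "0 < nstates M"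
    using wf by (rule wf_tm_nstates_pos)
  have "det_steps 6 (apps (branch_work M b j) [I, enc_str 2 (bin n), L, enc_char 3 (work_idx a), R, T])
      (apps (enc_char 3 (work_idx a)) (?acts @ ?args))"
    using assms Q by (intro run_det_steps) simp
  also have "det_steps 3 (apps (enc_char 3 (work_idx a)) (?acts @ ?args)) (apps (?acts ! work_idx a) ?args)"
    using assms Q by (intro enc_char_select) (auto simp: work_idx_less)
  also have "?acts ! work_idx a = do_action (nstates M) (Some (d, a', \<mu>, s'))"
    using \<delta> by (cases a) auto
  finally have select: "det_steps (6 + 3) (apps (branch_work M b j) [I, enc_str 2 (bin n), L, enc_char 3 (work_idx a), R, T])
      (apps (do_action (nstates M) (Some (d, a', \<mu>, s'))) ?args)" .
  obtain m where "det_steps m (apps (do_action (nstates M) (Some (d, a', \<mu>, s'))) ?args)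
      (apps (work_move (nstates M) \<mu> a' s') [I, enc_str 2 (bin n'), L, R, T])"
      "m \<le> 6 + 15 * (length (bin n) + 1)"
    using do_action_steps[OF Q] wf_tm_delta[OF wf \<delta>] assms(3-) by blast
  then show ?thesis
    using det_steps_trans[OF select] by (intro exI[of _ "6 + 3 + m"]) auto
qed

definition state_step :: "tm \<Rightarrow> nat \<Rightarrow> dterm" where
  "state_step M j = lams 6 (apps nth_inp ([nth_inp, Var 4, Var 5] @
     map (\<lambda>b. branch_work M b j) [I0, I1, IL, IR] @ [Var 5, Var 4, Var 3, Var 2, Var 1, Var 0]))"

lemmas red_state_step[simp] = state_step_def[THEN red_App_lams]

lemma combinator_state_step[simp]: "0 < nstates M \<Longrightarrow> combinator (state_step M j)"
  unfolding combinator_def closed_def by (simp add: state_step_def)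

lemma state_step_steps:
  assumes wf: "wf_tm M" and n: "n < length i" and \<delta>: "delta M (i ! n) a j = Some (d, a', \<mu>, s')"
    and "int n' = int n + d" and "combinator L" "combinator R" "combinator T"
  shows "\<exists>m. det_steps m
      (apps (state_step M j) [enc_str 4 (map inp_idx i), enc_str 2 (bin n), L, enc_char 3 (work_idx a), R, T])
      (apps (work_move (nstates M) \<mu> a' s') [enc_str 4 (map inp_idx i), enc_str 2 (bin n'), L, R, T])
    \<and> m \<le> 40 + 15 * (length (bin n) + 1) + (n + 1) * (40 + 15 * length (bin n))"
proof -
  let ?I = "enc_str 4 (map inp_idx i)"
  let ?N = "enc_str 2 (bin n)"
  let ?branches = "map (\<lambda>b. branch_work M b j) [I0, I1, IL, IR]"
  let ?args = "[?I, ?N, L, enc_char 3 (work_idx a), R, T]"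
  have Q: "0 < nstates M"
    using wf by (rule wf_tm_nstates_pos)
  obtain mr where mr: "det_steps mr (apps nth_inp [nth_inp, ?N, ?I]) (enc_char 4 (inp_idx (i ! n)))"
      "mr \<le> (n + 1) * (40 + 15 * length (bin n))"
    using nth_inp_steps[OF n] by blast
  obtain m where m: "det_steps m (apps (branch_work M (i ! n) j) ?args)
      (apps (work_move (nstates M) \<mu> a' s') [?I, enc_str 2 (bin n'), L, R, T])"
      "m \<le> 15 + 15 * (length (bin n) + 1)"
    using branch_work_steps[OF wf \<delta> assms(4) combinator_enc_str assms(5-)] by blast
  have "det_steps 6 (apps (state_step M j) ?args) (apps (apps nth_inp [nth_inp, ?N, ?I]) (?branches @ ?args))"
    using assms Q by (intro run_det_steps) (simp add: apps_append)
  also have "det_steps mr (apps (apps nth_inp [nth_inp, ?N, ?I]) (?branches @ ?args))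
      (apps (enc_char 4 (inp_idx (i ! n))) (?branches @ ?args))"
    using assms Q by (intro det_steps_apps mr(1)) auto
  also have "det_steps 4 (apps (enc_char 4 (inp_idx (i ! n))) (?branches @ ?args))
      (apps (?branches ! inp_idx (i ! n)) ?args)"
    using assms Q by (intro enc_char_select) (auto simp: inp_idx_less)
  also have "?branches ! inp_idx (i ! n) = branch_work M (i ! n) j"
    by (cases "i ! n") auto
  also note m(1)
  finally show ?thesis
    using m(2) mr(2) by (intro exI[of _ "6 + mr + 4 + m"]) simp
qed

section \<open>The simulating term\<close>

definition state_halt :: "nat \<Rightarrow> nat \<Rightarrow> dterm" where
  "state_halt Q j = lams 7 (App (Var 0) (Lam (apps (Var 0) [Var 7, Var 6, Var 5, Var 4, Var 3, enc_char Q j])))"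

lemmas red_state_halt[simp] = state_halt_def[THEN red_App_lams]

definition state_handler :: "tm \<Rightarrow> nat \<Rightarrow> dterm" where
  "state_handler M j = (if j = s_T M \<or> j = s_F M then state_halt (nstates M) j else state_step M j)"

lemma combinator_state_handler[simp]: "0 < nstates M \<Longrightarrow> combinator (state_handler M j)"
  unfolding combinator_def closed_def by (simp add: state_handler_def state_halt_def)

definition dispatch_state :: "tm \<Rightarrow> dterm" where
  "dispatch_state M = lams 7 (apps (Var 1)
     (map (state_handler M) [0..<nstates M] @ [Var 6, Var 5, Var 4, Var 3, Var 2, Var 0]))"

lemma combinator_dispatch_state[simp]: "0 < nstates M \<Longrightarrow> combinator (dispatch_state M)"
  unfolding combinator_def closed_def by (auto simp: dispatch_state_def)

lemma dispatch_state_steps: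
  assumes "0 < nstates M" "s < nstates M" and "\<forall>v\<in>set [I, N, L, A, R, T]. closed v \<and> is_val v"
  shows "det_steps (7 + nstates M) (apps (dispatch_state M) [I, N, L, A, R, enc_char (nstates M) s, T])
     (apps (state_handler M s) [I, N, L, A, R, T])"
proof -
  let ?hs = "map (state_handler M) [0..<nstates M]"
  let ?vs = "[I, N, L, A, R, enc_char (nstates M) s, T]"
  have vs: "\<forall>v\<in>set ?vs. closed v \<and> is_val v"
    using assms by auto
  have "det_steps 7 (apps (dispatch_state M) ?vs)
      (substs (apps (Var 1) (?hs @ [Var 6, Var 5, Var 4, Var 3, Var 2, Var 0])) ?vs)"
    unfolding dispatch_state_def using vs by (intro det_steps_lams_apps) auto
  also have "substs (apps (Var 1) (?hs @ [Var 6, Var 5, Var 4, Var 3, Var 2, Var 0])) ?vs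
      = apps (enc_char (nstates M) s) (?hs @ [I, N, L, A, R, T])"
  proof -
    have hs: "map (\<lambda>h. substs h ?vs) ?hs = ?hs"
      using assms(1) by (intro map_idI) (auto intro: substs_closed simp del: substs.simps)
    show ?thesis
      unfolding substs_apps map_append hs using assms vs by (simp add: substs_Var del: substs.simps)
  qed
  also have "det_steps (nstates M) \<dots> (apps (?hs ! s) [I, N, L, A, R, T])"
    using assms by (intro enc_char_select) auto
  finally show ?thesis
    using assms by simp
qed

definition trans_body :: "tm \<Rightarrow> dterm" where
  "trans_body M = lams 3 (apps (Var 0) [dispatch_state M, Var 2, Var 1])"

lemmas red_trans_body[simp] = trans_body_def[THEN red_App_lams]

lemma combinator_trans_body[simp]: "0 < nstates M \<Longrightarrow> combinator (trans_body M)"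
  unfolding combinator_def closed_def by (simp add: trans_body_def)

definition trans_tm :: "tm \<Rightarrow> dterm" where
  "trans_tm M = App (trans_body M) (trans_body M)"

lemma trans_tm_dispatch:
  assumes wf: "wf_tm M" and s: "s < nstates M" and k: "is_val k"
  shows "det_steps (11 + nstates M) (App (App (trans_tm M) k) (enc_config M (i, n, wl, a, wr, s)))
    (App (apps (state_handler M s) [enc_str 4 (map inp_idx i), enc_str 2 (bin n),
       enc_str 3 (map work_idx (rev wl)), enc_char 3 (work_idx a), enc_str 3 (map work_idx wr), trans_body M]) k)"
proof -
  let ?C = "enc_config M (i, n, wl, a, wr, s)"
  let ?tape = "[enc_str 4 (map inp_idx i), enc_str 2 (bin n), enc_str 3 (map work_idx (rev wl)),
    enc_char 3 (work_idx a), enc_str 3 (map work_idx wr)]"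
  have Q: "0 < nstates M"
    using wf by (rule wf_tm_nstates_pos)
  have "det_steps 1 (apps ?C [dispatch_state M, trans_body M])
      (apps (dispatch_state M) (?tape @ [enc_char (nstates M) s, trans_body M]))"
    using Q s by (intro run_det_steps) (simp add: enc_config_tuple)
  also have "det_steps (7 + nstates M) \<dots> (apps (state_handler M s) (?tape @ [trans_body M]))"
    using dispatch_state_steps[OF Q s] Q by simp
  finally have dispatch: "det_steps (8 + nstates M) (App (apps ?C [dispatch_state M, trans_body M]) k)
      (App (apps (state_handler M s) (?tape @ [trans_body M])) k)"
    using k by (simp add: det_steps_App)
  have "det_steps 3 (App (App (trans_tm M) k) ?C) (App (apps ?C [dispatch_state M, trans_body M]) k)"
    using Q s k by (intro run_det_steps) (simp add: trans_tm_def enc_config_tuple)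
  from det_steps_trans[OF this dispatch] show ?thesis
    by simp
qed

lemma trans_tm_final_steps:
  assumes wf: "wf_tm M" and s: "s < nstates M" "s = s_T M \<or> s = s_F M" and k: "is_val k"
  shows "det_steps (18 + nstates M) (App (App (trans_tm M) k) (enc_config M (i, n, wl, a, wr, s)))
    (App k (enc_config M (i, n, wl, a, wr, s)))"
proof -
  let ?C = "enc_config M (i, n, wl, a, wr, s)"
  have Q: "0 < nstates M"
    using wf by (rule wf_tm_nstates_pos)
  note trans_tm_dispatch[OF wf s(1) k, of i n wl a wr]
  also have "det_steps 6 (apps (state_handler M s) [enc_str 4 (map inp_idx i), enc_str 2 (bin n),
       enc_str 3 (map work_idx (rev wl)), enc_char 3 (work_idx a), enc_str 3 (map work_idx wr), trans_body M])
      (Lam (App (Var 0) ?C))"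
    using Q s by (intro run_det_steps) (simp add: state_handler_def enc_config_tuple)
  then have "det_steps 6 (App (apps (state_handler M s) [enc_str 4 (map inp_idx i), enc_str 2 (bin n),
       enc_str 3 (map work_idx (rev wl)), enc_char 3 (work_idx a), enc_str 3 (map work_idx wr), trans_body M]) k)
      (App (Lam (App (Var 0) ?C)) k)"
    using k by (rule det_steps_App)
  also have "det_steps 1 (App (Lam (App (Var 0) ?C)) k) (App k ?C)"
    using Q s k by (intro run_det_steps) (simp add: enc_config_tuple)
  finally show ?thesis
    by simp
qed

lemma trans_tm_step_steps:
  assumes wf: "wf_tm M" and n: "n < length i" and step: "tm_step M (i, n, wl, a, wr, s) D" and k: "is_val k"
  shows "\<exists>m. det_steps m (App (App (trans_tm M) k) (enc_config M (i, n, wl, a, wr, s)))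
      (App (App (trans_tm M) k) (enc_config M D))
    \<and> m \<le> nstates M + 121 * (n + 1) * (length (bin n) + 1)"
proof -
  obtain d a' \<mu> s' n' wl' a'' wr' where \<delta>: "delta M (i ! n) a s = Some (d, a', \<mu>, s')"
    and n': "int n' = int n + d" and move: "move_work \<mu> wl a' wr = (wl', a'', wr')"
    and D: "D = (i, n', wl', a'', wr', s')"
    using step by (auto simp: tm_step_def)
  have Q: "0 < nstates M"
    using wf by (rule wf_tm_nstates_pos)
  have s: "s < nstates M" "s \<noteq> s_T M" "s \<noteq> s_F M"
    using wf_tm_delta[OF wf \<delta>] by auto
  let ?T = "trans_body M"
  let ?I = "enc_str 4 (map inp_idx i)"
  let ?L = "enc_str 3 (map work_idx (rev wl))"
  let ?R = "enc_str 3 (map work_idx wr)"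
  let ?D = "Lam (apps (Var 0) [?I, enc_str 2 (bin n'), enc_str 3 (map work_idx (rev wl')),
    enc_char 3 (work_idx a''), enc_str 3 (map work_idx wr'), enc_char (nstates M) s'])"
  obtain m1 where m1: "det_steps m1 (apps (state_step M s) [?I, enc_str 2 (bin n), ?L, enc_char 3 (work_idx a), ?R, ?T])
      (apps (work_move (nstates M) \<mu> a' s') [?I, enc_str 2 (bin n'), ?L, ?R, ?T])"
      "m1 \<le> 40 + 15 * (length (bin n) + 1) + (n + 1) * (40 + 15 * length (bin n))"
    using state_step_steps[OF wf n \<delta> n' combinator_enc_str combinator_enc_str combinator_trans_body[OF Q]]
    by blast
  obtain m2 where m2: "det_steps m2 (apps (work_move (nstates M) \<mu> a' s') [?I, enc_str 2 (bin n'), ?L, ?R, ?T])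
      (Lam (apps ?T [?T, Var 0, ?D]))" "m2 \<le> 14"
    using work_move_steps[OF Q combinator_enc_str combinator_enc_str combinator_trans_body[OF Q] move]
    by blast
  have "det_steps (m1 + m2) (apps (state_handler M s) [?I, enc_str 2 (bin n), ?L, enc_char 3 (work_idx a), ?R, ?T])
      (Lam (apps ?T [?T, Var 0, ?D]))"
    using det_steps_trans[OF m1(1) m2(1)] s by (simp add: state_handler_def)
  then have "det_steps (m1 + m2) (App (apps (state_handler M s) [?I, enc_str 2 (bin n), ?L, enc_char 3 (work_idx a), ?R, ?T]) k)
      (App (Lam (apps ?T [?T, Var 0, ?D])) k)"
    using k by (rule det_steps_App)
  with trans_tm_dispatch[OF wf s(1) k, of i n wl a wr]
  have "det_steps (11 + nstates M + (m1 + m2)) (App (App (trans_tm M) k) (enc_config M (i, n, wl, a, wr, s)))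
      (App (Lam (apps ?T [?T, Var 0, ?D])) k)"
    by (rule det_steps_trans)
  also have "det_steps 1 (App (Lam (apps ?T [?T, Var 0, ?D])) k) (App (App (trans_tm M) k) (enc_config M D))"
    using Q k by (intro run_det_steps) (simp add: D trans_tm_def enc_config_tuple)
  finally show ?thesis
    using m1(2) m2(2) by (intro exI[of _ "11 + nstates M + (m1 + m2) + 1"]) (simp add: algebra_simps)
qed

lemma one_le_mult_log2: "2 \<le> l \<Longrightarrow> 1 \<le> real l * log 2 (real l)"
  using mult_mono[of 1 "real l" 1 "log 2 (real l)"] by simp

lemma cost_le_mult_log2:
  assumes "2 \<le> l" and "n < l"
  shows "real (Q + 121 * (n + 1) * (length (bin n) + 1)) \<le> real (Q + 363) * real l * log 2 (real l)"
proof -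
  have log: "1 \<le> log 2 (real l)"
    using assms(1) by simp
  have "real (length (bin n) + 1) \<le> 3 * log 2 (real l)"
    using length_bin_le_log[OF assms(2)] log by simp
  moreover have "real (n + 1) \<le> real l"
    using assms(2) by simp
  ultimately have "real ((n + 1) * (length (bin n) + 1)) \<le> real l * (3 * log 2 (real l))"
    unfolding of_nat_mult by (intro mult_mono) auto
  moreover have "real Q \<le> real Q * (real l * log 2 (real l))"
    using one_le_mult_log2[OF assms(1)] by (simp add: mult_le_cancel_left1)
  ultimately show ?thesis
    by (simp add: algebra_simps)
qed

definition sim_const :: "tm \<Rightarrow> nat" where
  "sim_const M = nstates M + 363"

lemma trans_tm_final:
  assumes wf: "wf_tm M" and "is_config M C" and "is_final M C" and "is_val k"
  shows "\<exists>m. det_steps m (App (App (trans_tm M) k) (enc_config M C)) (App k (enc_config M C))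
    \<and> real m \<le> real (sim_const M) * real (length (fst C)) * log 2 (real (length (fst C)))"
proof -
  obtain i n wl a wr s where C: "C = (i, n, wl, a, wr, s)"
    by (cases C)
  with assms have l: "2 \<le> length i" and s: "s < nstates M" "s = s_T M \<or> s = s_F M"
    by (auto simp: is_config_def is_final_def)
  have "real (18 + nstates M) \<le> real (sim_const M) * 1"
    by (simp add: sim_const_def)
  also have "\<dots> \<le> real (sim_const M) * (real (length i) * log 2 (real (length i)))"
    using one_le_mult_log2[OF l] by (rule mult_left_mono) simp
  finally show ?thesis
    using trans_tm_final_steps[OF wf s \<open>is_val k\<close>] unfolding C fst_conv mult.assoc by blast
qed

lemma trans_tm_step:
  assumes wf: "wf_tm M" and "is_config M C" and "fst (snd C) < length (fst C)" and "tm_step M C D"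
    and "is_val k"
  shows "\<exists>m. det_steps m (App (App (trans_tm M) k) (enc_config M C)) (App (App (trans_tm M) k) (enc_config M D))
    \<and> real m \<le> real (sim_const M) * real (length (fst C)) * log 2 (real (length (fst C)))"
proof -
  obtain i n wl a wr s where C: "C = (i, n, wl, a, wr, s)"
    by (cases C)
  with assms have l: "2 \<le> length i" and n: "n < length i"
    by (auto simp: is_config_def)
  obtain m where "det_steps m (App (App (trans_tm M) k) (enc_config M C)) (App (App (trans_tm M) k) (enc_config M D))"
      and "m \<le> nstates M + 121 * (n + 1) * (length (bin n) + 1)"
    using trans_tm_step_steps[OF wf n _ \<open>is_val k\<close>] assms(4) unfolding C by blast
  moreover from this(2) have "real m \<le> real (sim_const M) * real (length i) * log 2 (real (length i))"
    using cost_le_mult_log2[OF l n] unfolding sim_const_def by (meson of_nat_le_iff order_trans)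
  ultimately show ?thesis
    unfolding C fst_conv by blast
qed

theorem mainTheorem8:
  assumes "wf_tm M" and "input_bounded M"
  shows "\<exists>trans (c::nat). closed trans \<and> det_term trans \<and>
    (\<forall>k C. det_term k \<and> is_val k \<and> is_config M C \<and> fst (snd C) < length (fst C) \<longrightarrow>
      (is_final M C \<longrightarrow>
         (\<exists>m. (det_step ^^ m) (App (App trans k) (enc_config M C)) (App k (enc_config M C)) \<and>
              real m \<le> real c * real (length (fst C)) * log 2 (real (length (fst C))))) \<and>
      (\<forall>D. tm_step M C D \<longrightarrow>
         (\<exists>m. (det_step ^^ m) (App (App trans k) (enc_config M C)) (App (App trans k) (enc_config M D)) \<and>
              real m \<le> real c * real (length (fst C)) * log 2 (real (length (fst C))))))"
proof (rule exI[of _ "trans_tm M"], rule exI[of _ "sim_const M"], intro conjI allI impI)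
  have "0 < nstates M"
    using assms(1) by (rule wf_tm_nstates_pos)
  then show "closed (trans_tm M)" "det_term (trans_tm M)"
    unfolding trans_tm_def closed_def by simp_all
qed (use assms(1) trans_tm_final trans_tm_step in blast)+

end
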